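(* Let $\phi\in\mathcal S$ with radius of convergence $x_0$. Then: (i) The function $h(x):=\phi'(-x)$ is completely monotone on $(-x_0,\infty)$, i.e. $(-1)^nh^{(n)}(x)\ge0$ for all $n\ge0$ and $x\in(-x_0,\infty)$. (ii) $h$ is the Laplace–Stieltjes transform $h(x)=\int_0^\infty e^{-xt}\mu(dt)$ of a finite nonnegative measure $\mu$ on $[0,\infty)$, with $h(x)=\sum_{m\ge0}\frac{\phi_{m+1}}{m!}(-x)^m$. (iii) $\phi_{m+1}=\int t^m\mu(dt)$ for all $m\ge0$; in particular, $\mu$ has total mass $\phi_1$. (iv) $\phi_{m+1}\phi_{m-1}\ge\phi_m^2$ for all $m\ge2$, i.e. $(\phi_m)_{m\ge1}$ is log-convex.
   Context: Let $(\phi_m)_{m\ge1}$ be nonnegative reals with $\phi_1>0$, and let $\phi(x)=\sum_{m\ge1}\phi_mx^m/m!$ have radius of convergence $x_0\in(0,\infty]$. A $C^\infty$ function $f$ is absolutely monotone on an open interval $I$ if $f^{(n)}(x)\ge0$ for all $n\ge0$ and $x\in I$. We write $\phi\in\mathcal S$ if $\phi$ is defined (finite) on the whole half-line $(-\infty,x_0)$ and $\phi'$ is absolutely monotone on $(-\infty,x_0)$. *)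

theory Defs
  imports "HOL-Analysis.Analysis"
begin

definition smooth_on :: "real set \<Rightarrow> (real \<Rightarrow> real) \<Rightarrow> bool" where
  "smooth_on I f \<longleftrightarrow>
     (\<forall>n. \<forall>x\<in>I. ((deriv ^^ n) f has_real_derivative (deriv ^^ Suc n) f x) (at x))"

definition abs_monotone_on :: "real set \<Rightarrow> (real \<Rightarrow> real) \<Rightarrow> bool" where
  "abs_monotone_on I f \<longleftrightarrow> smooth_on I f \<and> (\<forall>n. \<forall>x\<in>I. (deriv ^^ n) f x \<ge> 0)"

definition compl_monotone_on :: "real set \<Rightarrow> (real \<Rightarrow> real) \<Rightarrow> bool" where
  "compl_monotone_on I f \<longleftrightarrow> smooth_on I f \<and> (\<forall>n. \<forall>x\<in>I. (-1) ^ n * (deriv ^^ n) f x \<ge> 0)"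

text \<open>Power series coefficients of phi(x) = sum_{m>=1} phi_m x^m / m!.\<close>
definition phi_coeffs :: "(nat \<Rightarrow> real) \<Rightarrow> nat \<Rightarrow> real" where
  "phi_coeffs c n = (if n = 0 then 0 else c n / fact n)"

definition in_S :: "(nat \<Rightarrow> real) \<Rightarrow> (real \<Rightarrow> real) \<Rightarrow> bool" where
  "in_S c F \<longleftrightarrow>
     (\<forall>x. ereal \<bar>x\<bar> < conv_radius (phi_coeffs c) \<longrightarrow>
            F x = (\<Sum>n. phi_coeffs c n * x ^ n)) \<and>
     (\<forall>x. ereal x < conv_radius (phi_coeffs c) \<longrightarrow> F differentiable (at x)) \<and>
     abs_monotone_on {x. ereal x < conv_radius (phi_coeffs c)} (deriv F)"

end

theory Submission
  imports Defs "HOL-Probability.Probability" "HOL-Complex_Analysis.Cauchy_Integral_Formula"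
begin

text \<open>Write \<open>D k\<close> for the \<open>k\<close>-th derivative of \<open>\<phi>'\<close>; all \<open>D k\<close> are nonnegative on
  \<open>(-\<infinity>, x\<^sub>0)\<close>. Such a function is the sum of its Taylor series about every \<open>a < x\<^sub>0\<close> on
  \<open>[a, x\<^sub>0)\<close>, because the remainder divided by \<open>(x - a)\<^sup>n\<^sup>+\<^sup>1\<close> is nondecreasing in \<open>x\<close>.
  Expanding about \<open>-N\<close> writes \<open>D 0 y / D 0 0\<close> as \<open>\<Sum>\<^sub>k w\<^sub>N(k) (1 + y/N)\<^sup>k\<close>, the moment
  generating function, evaluated at \<open>N ln (1 + y/N)\<close>, of the probability measure with mass
  \<open>w\<^sub>N(k)\<close> at \<open>k/N\<close>. These measures are tight; along a weakly convergent subsequence,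
  Skorohod's representation and dominated convergence give the Laplace transform of the limit
  \<open>P\<close> for \<open>y \<le> 0\<close>, and Fatou's lemma makes \<open>exp (y t)\<close> integrable for all \<open>y < x\<^sub>0\<close>.
  The moment generating function of \<open>P\<close> and the power series of \<open>\<phi>'/\<phi>\<^sub>1\<close> then agree on
  \<open>(-x\<^sub>0, 0]\<close>, so they have the same coefficients, which are the moments divided by \<open>m!\<close>;
  finally \<open>\<mu> = \<phi>\<^sub>1 P\<close>. Log-convexity holds because \<open>\<integral> t\<^sup>m\<^sup>-\<^sup>1 (t - l)\<^sup>2 d\<mu> \<ge> 0\<close> for every \<open>l\<close>.\<close>

section \<open>Taylor series of functions with nonnegative derivatives\<close>

lemma ereal_le_less_trans: "x \<le> y \<Longrightarrow> ereal y < b \<Longrightarrow> ereal x < b"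
  by (meson ereal_less_eq(3) order_le_less_trans)

lemma DERIV_nonneg_imp_nonneg:
  fixes f :: "real \<Rightarrow> real"
  assumes "a \<le> t" "f a = 0"
    and "\<And>s. a \<le> s \<Longrightarrow> s \<le> t \<Longrightarrow> \<exists>d. (f has_real_derivative d) (at s) \<and> 0 \<le> d"
  shows "0 \<le> f t"
  using DERIV_nonneg_imp_nondecreasing[of a t f] assms by simp

locale abs_monotone_derivs =
  fixes D :: "nat \<Rightarrow> real \<Rightarrow> real" and b :: ereal
  assumes has_deriv: "\<And>k t. ereal t < b \<Longrightarrow> (D k has_real_derivative D (Suc k) t) (at t)"
    and nonneg: "\<And>k t. ereal t < b \<Longrightarrow> 0 \<le> D k t"
begin

context
  fixes a :: real
begin

definition taylor_poly :: "nat \<Rightarrow> nat \<Rightarrow> real \<Rightarrow> real" where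
  "taylor_poly n k t = (\<Sum>i<n. D (k + i) a * (t - a) ^ i / fact i)"

definition taylor_rem :: "nat \<Rightarrow> nat \<Rightarrow> real \<Rightarrow> real" where
  "taylor_rem n k t = D k t - taylor_poly n k t"

lemma taylor_poly_Suc_base: "taylor_poly (Suc n) k a = D k a"
  by (induction n) (auto simp: taylor_poly_def)

lemma taylor_rem_0 [simp]: "taylor_rem 0 k = D k"
  by (simp add: fun_eq_iff taylor_rem_def taylor_poly_def)

lemma taylor_rem_Suc_base [simp]: "taylor_rem (Suc n) k a = 0"
  by (simp add: taylor_rem_def taylor_poly_Suc_base)

lemma has_real_derivative_taylor_poly:
  "(taylor_poly (Suc n) k has_real_derivative taylor_poly n (Suc k) t) (at t)"
proof (induction n)
  case 0
  then show ?case by (simp add: taylor_poly_def)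
next
  case (Suc n)
  have "((\<lambda>t. (t - a) ^ Suc n) has_real_derivative real (Suc n) * (t - a) ^ n) (at t)"
    by (rule derivative_eq_intros refl)+ simp
  from DERIV_cdivide[OF this, of "fact (Suc n)"]
  have "((\<lambda>t. (t - a) ^ Suc n / fact (Suc n)) has_real_derivative (t - a) ^ n / fact n) (at t)"
    by (simp del: of_nat_Suc)
  from DERIV_add[OF Suc DERIV_cmult[OF this, of "D (k + Suc n) a"]] show ?case
    by (simp add: taylor_poly_def add_ac)
qed

lemma has_real_derivative_taylor_rem:
  "ereal t < b \<Longrightarrow> (taylor_rem (Suc n) k has_real_derivative taylor_rem n (Suc k) t) (at t)"
  unfolding taylor_rem_def[abs_def]
  by (auto intro!: DERIV_diff has_deriv has_real_derivative_taylor_poly)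

lemma taylor_rem_nonneg: "a \<le> t \<Longrightarrow> ereal t < b \<Longrightarrow> 0 \<le> taylor_rem n k t"
proof (induction n arbitrary: k t)
  case 0
  then show ?case by (simp add: nonneg)
next
  case (Suc n)
  show ?case
  proof (rule DERIV_nonneg_imp_nonneg[of a t "taylor_rem (Suc n) k", OF Suc.prems(1)])
    fix s assume "a \<le> s" "s \<le> t"
    moreover from this have "ereal s < b" using Suc.prems(2) by (simp add: ereal_le_less_trans)
    ultimately show "\<exists>d. (taylor_rem (Suc n) k has_real_derivative d) (at s) \<and> 0 \<le> d"
      using Suc.IH has_real_derivative_taylor_rem by blast
  qed simp
qed

text \<open>For \<open>k = 0\<close> this says that \<open>taylor_rem (Suc n) 0 t / (t - a) ^ Suc n\<close> has nonnegative
  derivative.\<close>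
lemma taylor_rem_ratio_ineq:
  assumes "a \<le> t" "ereal t < b"
  shows "real (Suc n) * taylor_rem (Suc n) k t \<le> (t - a) * taylor_rem n (Suc k) t"
  using assms
proof (induction n arbitrary: k t)
  case 0
  let ?E = "\<lambda>t. (t - a) * D (Suc k) t - taylor_rem 1 k t"
  have "0 \<le> ?E t"
  proof (rule DERIV_nonneg_imp_nonneg[OF 0(1)])
    fix s assume "a \<le> s" "s \<le> t"
    moreover from this have "ereal s < b" using 0(2) by (simp add: ereal_le_less_trans)
    ultimately have "(?E has_real_derivative (s - a) * D (Suc (Suc k)) s) (at s)"
        "0 \<le> (s - a) * D (Suc (Suc k)) s"
      using has_real_derivative_taylor_rem[of s 0 k] nonneg[of s]
      by (auto intro!: derivative_eq_intros has_deriv)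
    then show "\<exists>d. (?E has_real_derivative d) (at s) \<and> 0 \<le> d" by blast
  qed simp
  then show ?case by simp
next
  case (Suc n)
  let ?E = "\<lambda>t. (t - a) * taylor_rem (Suc n) (Suc k) t - real (Suc (Suc n)) * taylor_rem (Suc (Suc n)) k t"
  have "0 \<le> ?E t"
  proof (rule DERIV_nonneg_imp_nonneg[OF Suc.prems(1)])
    fix s assume "a \<le> s" "s \<le> t"
    moreover from this have "ereal s < b" using Suc.prems(2) by (simp add: ereal_le_less_trans)
    ultimately have "(?E has_real_derivative
        (s - a) * taylor_rem n (Suc (Suc k)) s - real (Suc n) * taylor_rem (Suc n) (Suc k) s) (at s)"
          "0 \<le> (s - a) * taylor_rem n (Suc (Suc k)) s - real (Suc n) * taylor_rem (Suc n) (Suc k) s"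
      using Suc.IH[of s "Suc k"]
      by (auto intro!: derivative_eq_intros has_real_derivative_taylor_rem simp: algebra_simps)
    then show "\<exists>d. (?E has_real_derivative d) (at s) \<and> 0 \<le> d" by blast
  qed simp
  then show ?case by simp
qed

lemma taylor_rem_ratio_mono:
  assumes "a < s" "s \<le> t" "ereal t < b"
  shows "taylor_rem (Suc n) 0 s / (s - a) ^ Suc n \<le> taylor_rem (Suc n) 0 t / (t - a) ^ Suc n"
proof (rule DERIV_nonneg_imp_nondecreasing[OF assms(2)])
  fix u assume "s \<le> u" "u \<le> t"
  then have u: "a < u" "ereal u < b"
    using assms by (auto intro: order_le_less_trans[of _ "ereal t"])
  have "((\<lambda>u. (u - a) ^ Suc n) has_real_derivative real (Suc n) * (u - a) ^ n) (at u)"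
    by (rule derivative_eq_intros refl)+ simp
  from DERIV_divide[OF has_real_derivative_taylor_rem[OF u(2)] this]
  have "((\<lambda>u. taylor_rem (Suc n) 0 u / (u - a) ^ Suc n) has_real_derivative
      (u - a) ^ n * ((u - a) * taylor_rem n 1 u - real (Suc n) * taylor_rem (Suc n) 0 u)
        / ((u - a) ^ Suc n * (u - a) ^ Suc n)) (at u)"
    using u by (simp add: algebra_simps)
  moreover have "0 \<le> (u - a) ^ n * ((u - a) * taylor_rem n 1 u - real (Suc n) * taylor_rem (Suc n) 0 u)
        / ((u - a) ^ Suc n * (u - a) ^ Suc n)"
    using taylor_rem_ratio_ineq[of u n 0] u by (intro divide_nonneg_nonneg mult_nonneg_nonneg) auto
  ultimately show "\<exists>d. ((\<lambda>u. taylor_rem (Suc n) 0 u / (u - a) ^ Suc n) has_real_derivative d) (at u)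
      \<and> 0 \<le> d"
    by blast
qed

lemma taylor_rem_le:
  assumes "a \<le> t" "ereal t < b"
  shows "taylor_rem n k t \<le> D k t"
proof -
  have "ereal a < b" using assms by (simp add: ereal_le_less_trans)
  then show ?thesis
    using assms by (auto simp: taylor_rem_def taylor_poly_def
        intro!: sum_nonneg divide_nonneg_nonneg mult_nonneg_nonneg nonneg)
qed

lemma taylor_series_sums:
  assumes "a \<le> x" "ereal x < b"
  shows "(\<lambda>i. D i a * (x - a) ^ i / fact i) sums D 0 x"
proof -
  have "(\<lambda>n. taylor_rem (Suc n) 0 x) \<longlonglongrightarrow> 0"
  proof (cases "x = a")
    case False
    then have xa: "a < x" using assms by simp
    obtain y where xy: "x < y" and yb: "ereal y < b" using ereal_dense2[OF assms(2)] by auto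
    define q where "q = (x - a) / (y - a)"
    have q: "0 \<le> q" "q < 1" using xa xy by (auto simp: q_def)
    have rem_le: "taylor_rem (Suc n) 0 x \<le> q ^ Suc n * D 0 y" for n
    proof -
      have "taylor_rem (Suc n) 0 x \<le> (x - a) ^ Suc n * (taylor_rem (Suc n) 0 y / (y - a) ^ Suc n)"
        using taylor_rem_ratio_mono[of x y n] xa xy yb by (simp add: field_simps)
      also have "\<dots> = q ^ Suc n * taylor_rem (Suc n) 0 y" by (simp add: q_def power_divide)
      also have "\<dots> \<le> q ^ Suc n * D 0 y"
        using taylor_rem_le[of y] xa xy yb q by (intro mult_left_mono) auto
      finally show ?thesis .
    qed
    have "(\<lambda>n. q ^ Suc n) \<longlonglongrightarrow> 0"
      by (rule LIMSEQ_Suc[OF LIMSEQ_power_zero]) (use q in simp)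
    note bound_lim = tendsto_mult_left_zero[OF this, of "D 0 y"]
    show ?thesis
      by (rule real_tendsto_sandwich[OF always_eventually always_eventually tendsto_const bound_lim])
         (use taylor_rem_nonneg[OF assms] rem_le in blast)+
  qed simp
  from tendsto_diff[OF tendsto_const[of "D 0 x"] this]
  have "(\<lambda>n. taylor_poly (Suc n) 0 x) \<longlonglongrightarrow> D 0 x"
    unfolding taylor_rem_def by simp
  then have "(\<lambda>n. \<Sum>i<Suc n. D i a * (x - a) ^ i / fact i) \<longlonglongrightarrow> D 0 x"
    by (simp add: taylor_poly_def)
  then show ?thesis
    unfolding sums_def by (rule LIMSEQ_imp_Suc)
qed

end

end

section \<open>Exponential moments of measures on the half-line\<close>

lemma AE_nonneg_iff_emeasure_distr_neg:
  fixes X :: "'a \<Rightarrow> real"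
  assumes [measurable]: "X \<in> borel_measurable M"
  shows "(AE \<omega> in M. 0 \<le> X \<omega>) \<longleftrightarrow> emeasure (distr M borel X) {..<0} = 0"
proof -
  have "emeasure (distr M borel X) {..<0} = emeasure M {\<omega>\<in>space M. \<not> 0 \<le> X \<omega>}"
    by (subst emeasure_distr) (auto intro!: arg_cong[where f="emeasure M"])
  moreover have "{\<omega>\<in>space M. \<not> 0 \<le> X \<omega>} \<in> sets M"
    by measurable
  ultimately show ?thesis
    by (simp add: AE_iff_measurable)
qed

lemma nn_integral_exp_limit_le:
  fixes X :: "nat \<Rightarrow> 'a \<Rightarrow> real"
  assumes [measurable]: "\<And>n. X n \<in> borel_measurable M" "Y \<in> borel_measurable M"
    and conv: "\<And>\<omega>. \<omega> \<in> space M \<Longrightarrow> (\<lambda>n. X n \<omega>) \<longlonglongrightarrow> Y \<omega>"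
    and l: "l \<longlonglongrightarrow> y"
    and ev: "eventually (\<lambda>n. (\<integral>\<^sup>+\<omega>. ennreal (exp (l n * X n \<omega>)) \<partial>M) = v) sequentially"
  shows "(\<integral>\<^sup>+\<omega>. ennreal (exp (y * Y \<omega>)) \<partial>M) \<le> v"
proof -
  have "(\<integral>\<^sup>+\<omega>. ennreal (exp (y * Y \<omega>)) \<partial>M)
      = (\<integral>\<^sup>+\<omega>. liminf (\<lambda>n. ennreal (exp (l n * X n \<omega>))) \<partial>M)"
  proof (rule nn_integral_cong)
    fix \<omega> assume "\<omega> \<in> space M"
    then have "(\<lambda>n. ennreal (exp (l n * X n \<omega>))) \<longlonglongrightarrow> ennreal (exp (y * Y \<omega>))"
      by (intro tendsto_ennrealI tendsto_intros conv l)
    then show "ennreal (exp (y * Y \<omega>)) = liminf (\<lambda>n. ennreal (exp (l n * X n \<omega>)))"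
      by (subst lim_imp_Liminf) auto
  qed
  also have "\<dots> \<le> liminf (\<lambda>n. \<integral>\<^sup>+\<omega>. ennreal (exp (l n * X n \<omega>)) \<partial>M)"
    by (rule nn_integral_liminf) measurable
  also have "\<dots> = v"
    using ev by (simp add: lim_imp_Liminf tendsto_eventually)
  finally show ?thesis .
qed

lemma (in finite_measure) integral_exp_limit:
  fixes X :: "nat \<Rightarrow> 'a \<Rightarrow> real"
  assumes [measurable]: "\<And>n. X n \<in> borel_measurable M" "Y \<in> borel_measurable M"
    and conv: "\<And>\<omega>. \<omega> \<in> space M \<Longrightarrow> (\<lambda>n. X n \<omega>) \<longlonglongrightarrow> Y \<omega>"
    and l: "l \<longlonglongrightarrow> y" and l_nonpos: "\<And>n. l n \<le> 0"
    and X_nonneg: "\<And>n. AE \<omega> in M. 0 \<le> X n \<omega>"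
  shows "(\<lambda>n. \<integral>\<omega>. exp (l n * X n \<omega>) \<partial>M) \<longlonglongrightarrow> (\<integral>\<omega>. exp (y * Y \<omega>) \<partial>M)"
proof (rule integral_dominated_convergence[where w="\<lambda>_. 1"])
  show "AE \<omega> in M. (\<lambda>n. exp (l n * X n \<omega>)) \<longlonglongrightarrow> exp (y * Y \<omega>)"
    by (intro AE_I2 tendsto_intros conv l)
  show "AE \<omega> in M. norm (exp (l n * X n \<omega>)) \<le> 1" for n
    using X_nonneg[of n] by eventually_elim (simp add: mult_nonpos_nonneg l_nonpos)
qed auto

lemma tight_subsequence_Skorohod:
  assumes "tight \<mu>"
  obtains r and \<Omega> :: "real measure" and X :: "nat \<Rightarrow> real \<Rightarrow> real" and Y
  where "strict_mono r" "prob_space \<Omega>" "\<And>n. X n \<in> borel_measurable \<Omega>"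
    "\<And>n. distr \<Omega> borel (X n) = \<mu> (r n)" "Y \<in> borel_measurable \<Omega>"
    "real_distribution (distr \<Omega> borel Y)" "\<And>\<omega>. \<omega> \<in> space \<Omega> \<Longrightarrow> (\<lambda>n. X n \<omega>) \<longlonglongrightarrow> Y \<omega>"
proof -
  obtain r M where "strict_mono r" "real_distribution M" "weak_conv_m (\<lambda>n. \<mu> (r n)) M"
    using tight_imp_convergent_subsubsequence[OF assms strict_mono_id] by (auto simp: comp_def)
  moreover have "real_distribution (\<mu> n)" for n
    using assms by (simp add: tight_def)
  ultimately obtain \<Omega> :: "real measure" and X Y where "prob_space \<Omega>"
    "\<forall>n. X n \<in> borel_measurable \<Omega>" "\<forall>n. distr \<Omega> borel (X n) = \<mu> (r n)"
    "Y \<in> borel_measurable \<Omega>" "distr \<Omega> borel Y = M" "\<forall>\<omega>\<in>space \<Omega>. (\<lambda>n. X n \<omega>) \<longlonglongrightarrow> Y \<omega>"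
    using Skorohod[of "\<lambda>n. \<mu> (r n)" M] by auto
  with that[of r \<Omega> X Y] \<open>strict_mono r\<close> \<open>real_distribution M\<close> show thesis
    by auto
qed

lemma AE_nonneg_limit:
  fixes X :: "nat \<Rightarrow> 'a \<Rightarrow> real"
  assumes conv: "\<And>\<omega>. \<omega> \<in> space M \<Longrightarrow> (\<lambda>n. X n \<omega>) \<longlonglongrightarrow> Y \<omega>"
    and nonneg: "\<And>n. AE \<omega> in M. 0 \<le> X n \<omega>"
  shows "AE \<omega> in M. 0 \<le> Y \<omega>"
proof -
  have "AE \<omega> in M. \<forall>n. 0 \<le> X n \<omega>"
    using nonneg by (simp add: AE_all_countable)
  then show ?thesis
    using AE_space by eventually_elim (auto intro: LIMSEQ_le_const[OF conv])
qed

lemma exp_real_sums: "(\<lambda>n. x ^ n / fact n) sums exp (x :: real)"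
  using exp_converges[of x] by (simp add: divide_inverse mult.commute)

lemma sum_power_div_fact_le_exp:
  fixes x :: real
  assumes "0 \<le> x"
  shows "(\<Sum>m\<in>A. x ^ m / fact m) \<le> exp x"
proof (cases "finite A")
  case True
  have "(\<Sum>m\<in>A. x ^ m / fact m) \<le> (\<Sum>m. x ^ m / fact m)"
    using True assms exp_real_sums[of x] by (intro sum_le_suminf) (auto simp: sums_iff)
  then show ?thesis
    using exp_real_sums[of x] by (simp add: sums_iff)
qed simp

lemma integrable_power_if_integrable_exp:
  fixes M :: "real measure"
  assumes [measurable_cong]: "sets M = sets borel"
    and nonneg: "AE t in M. 0 \<le> t" and s: "0 < s" and int: "integrable M (\<lambda>t. exp (s * t))"
  shows "integrable M (\<lambda>t. t ^ m)"
proof (rule Bochner_Integration.integrable_bound)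
  show "integrable M (\<lambda>t. fact m / s ^ m * exp (s * t))"
    using int by simp
  show "AE t in M. norm (t ^ m) \<le> norm (fact m / s ^ m * exp (s * t))"
    using nonneg
  proof eventually_elim
    case (elim t)
    have "(s * t) ^ m / fact m \<le> exp (s * t)"
      using sum_power_div_fact_le_exp[of "s * t" "{m}"] s elim by simp
    then show ?case
      using s elim by (simp add: field_simps)
  qed
qed simp

lemma integral_exp_sums_moments:
  fixes M :: "real measure"
  assumes [measurable_cong]: "sets M = sets borel"
    and nonneg: "AE t in M. 0 \<le> t" and int_exp: "integrable M (\<lambda>t. exp (\<bar>y\<bar> * t))"
    and int_power: "\<And>m. integrable M (\<lambda>t. t ^ m)"
  shows "(\<lambda>m. y ^ m / fact m * (\<integral>t. t ^ m \<partial>M)) sums (\<integral>t. exp (y * t) \<partial>M)"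
proof -
  have "(\<lambda>n. \<integral>t. (\<Sum>m<n. (y * t) ^ m / fact m) \<partial>M) \<longlonglongrightarrow> (\<integral>t. exp (y * t) \<partial>M)"
  proof (rule integral_dominated_convergence[OF _ _ int_exp])
    show "AE t in M. (\<lambda>n. \<Sum>m<n. (y * t) ^ m / fact m) \<longlonglongrightarrow> exp (y * t)"
      using exp_real_sums by (simp add: sums_def)
    show "AE t in M. norm (\<Sum>m<n. (y * t) ^ m / fact m) \<le> exp (\<bar>y\<bar> * t)" for n
      using nonneg
    proof eventually_elim
      case (elim t)
      have "norm (\<Sum>m<n. (y * t) ^ m / fact m) \<le> (\<Sum>m<n. (\<bar>y\<bar> * t) ^ m / fact m)"
        using elim norm_sum[of "\<lambda>m. (y * t) ^ m / fact m"] by (simp add: abs_mult power_abs)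
      also have "\<dots> \<le> exp (\<bar>y\<bar> * t)"
        using elim by (intro sum_power_div_fact_le_exp) simp
      finally show ?case .
    qed
  qed simp_all
  moreover have "(\<integral>t. (\<Sum>m<n. (y * t) ^ m / fact m) \<partial>M) = (\<Sum>m<n. y ^ m / fact m * (\<integral>t. t ^ m \<partial>M))" for n
    using int_power by (simp add: power_mult_distrib Bochner_Integration.integral_sum)
  ultimately show ?thesis
    by (simp add: sums_def)
qed

lemma powser_zero_if_zero_left:
  fixes d :: "nat \<Rightarrow> real"
  assumes r: "0 < r" and sums: "\<And>y. \<bar>y\<bar> < r \<Longrightarrow> (\<lambda>m. d m * y ^ m) sums g y"
    and zero: "\<And>y. - r < y \<Longrightarrow> y \<le> 0 \<Longrightarrow> g y = 0"
  shows "d m = 0"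
proof (rule ccontr)
  assume "d m \<noteq> 0"
  moreover have "d 0 = 0"
    using sums[of 0] zero[of 0] r by (simp add: sums_iff)
  ultimately have "0 < m"
    by (metis gr0I)
  have "(\<lambda>n. d n * (x - 0) ^ n) sums g x" if "norm (x - 0) < r" for x
    using sums that by simp
  from powser_0_nonzero[OF r this _ \<open>d m \<noteq> 0\<close> \<open>0 < m\<close>] zero[of 0] r
  obtain s where s: "0 < s" and nonzero: "\<And>z. z \<in> cball 0 s - {0} \<Longrightarrow> g z \<noteq> 0"
    by auto
  define z where "z = - min s r / 2"
  have "z \<in> cball 0 s - {0}" "- r < z" "z \<le> 0"
    using s r by (auto simp: z_def)
  then show False
    using nonzero zero by blast
qed

lemma laplace_powser_moments:
  fixes P :: "real measure" and b :: ereal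
  assumes sets [measurable_cong]: "sets P = sets borel" and nonneg: "AE t in P. 0 \<le> t" and b: "0 < b"
    and int_exp: "\<And>y. ereal y < b \<Longrightarrow> integrable P (\<lambda>t. exp (y * t))"
    and powser: "\<And>y. ereal \<bar>y\<bar> < b \<Longrightarrow> (\<lambda>m. a m * y ^ m) sums g y"
    and laplace: "\<And>y. y \<le> 0 \<Longrightarrow> (\<integral>t. exp (y * t) \<partial>P) = g y"
  shows "integrable P (\<lambda>t. t ^ m)" and "(\<integral>t. t ^ m \<partial>P) = fact m * a m"
    and "ereal y < b \<Longrightarrow> (\<integral>t. exp (y * t) \<partial>P) = g y"
proof -
  obtain s where s: "0 < s" "ereal s < b"
    using ereal_dense2[OF b] by (metis ereal_less(2))
  show int_power: "integrable P (\<lambda>t. t ^ k)" for k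
    using integrable_power_if_integrable_exp[OF sets nonneg s(1) int_exp[OF s(2)]] .
  have moments_sums: "(\<lambda>m. y ^ m / fact m * (\<integral>t. t ^ m \<partial>P)) sums (\<integral>t. exp (y * t) \<partial>P)"
    if "ereal \<bar>y\<bar> < b" for y
    using integral_exp_sums_moments[OF sets nonneg int_exp[OF that] int_power] .
  have "a k - (\<integral>t. t ^ k \<partial>P) / fact k = 0" for k
  proof (rule powser_zero_if_zero_left[OF s(1)])
    fix y :: real assume "\<bar>y\<bar> < s"
    then have "ereal \<bar>y\<bar> < ereal s"
      by simp
    then have "ereal \<bar>y\<bar> < b"
      using s(2) by (rule order.strict_trans)
    from sums_diff[OF powser[OF this] moments_sums[OF this]]
    show "(\<lambda>m. (a m - (\<integral>t. t ^ m \<partial>P) / fact m) * y ^ m) sums (g y - (\<integral>t. exp (y * t) \<partial>P))"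
      by (simp add: algebra_simps)
  qed (simp add: laplace)
  then show moments: "(\<integral>t. t ^ m \<partial>P) = fact m * a m" for m
    by (simp add: field_simps)
  show "(\<integral>t. exp (y * t) \<partial>P) = g y" if "ereal y < b"
  proof (cases "y \<le> 0")
    case False
    with that have "ereal \<bar>y\<bar> < b"
      by simp
    from moments_sums[OF this] powser[OF this] show ?thesis
      by (simp add: moments sums_iff mult_ac)
  qed (rule laplace)
qed

lemma
  fixes c :: real
  assumes "0 < c" and [measurable]: "f \<in> borel_measurable M"
  shows integrable_density_const: "integrable (density M (\<lambda>_. ennreal c)) f \<longleftrightarrow> integrable M f"
    and integral_density_const: "(\<integral>x. f x \<partial>density M (\<lambda>_. ennreal c)) = c * (\<integral>x. f x \<partial>M)"
  using assms by (simp_all add: integrable_density integral_density)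

section \<open>Bernstein's approximating measures\<close>

locale bernstein = abs_monotone_derivs +
  assumes b_pos: "0 < b" and D0_pos: "0 < D 0 0"
begin

text \<open>The \<open>N\<close> of the construction, shifted so that it is positive for every \<open>n\<close>.\<close>
definition grid_scale :: "nat \<Rightarrow> real" where
  "grid_scale n = real (Suc n)"

definition approx_weight :: "nat \<Rightarrow> nat \<Rightarrow> real" where
  "approx_weight n k = D k (- grid_scale n) * grid_scale n ^ k / fact k / D 0 0"

definition approx_measure :: "nat \<Rightarrow> real measure" where
  "approx_measure n =
     distr (density (count_space UNIV) (\<lambda>k. ennreal (approx_weight n k))) borel (\<lambda>k. real k / grid_scale n)"

text \<open>The else-branch is junk: for fixed \<open>y\<close> only large \<open>n\<close> matter.\<close>
definition approx_exponent :: "nat \<Rightarrow> real \<Rightarrow> real" where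
  "approx_exponent n y = (if 0 < 1 + y / grid_scale n then grid_scale n * ln (1 + y / grid_scale n) else y)"

lemma grid_scale_pos [simp]: "0 < grid_scale n"
  and grid_scale_nonzero [simp]: "grid_scale n \<noteq> 0"
  by (simp_all add: grid_scale_def)

lemma one_plus_div_grid_scale_pos: "- grid_scale n < y \<Longrightarrow> 0 < 1 + y / grid_scale n"
  by (simp add: field_simps)

lemma eventually_neg_grid_scale_less: "eventually (\<lambda>n. - grid_scale n < y) sequentially"
proof -
  obtain n0 :: nat where "\<bar>y\<bar> < real n0"
    using reals_Archimedean2 by blast
  then show ?thesis
    unfolding eventually_sequentially by (auto simp: grid_scale_def intro!: exI[of _ n0])
qed

lemma nonpos_less_b: "x \<le> 0 \<Longrightarrow> ereal x < b"
  using b_pos by (simp add: ereal_le_less_trans zero_ereal_def)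

lemma approx_weight_nonneg: "0 \<le> approx_weight n k"
  unfolding approx_weight_def using nonneg[OF nonpos_less_b, of "- grid_scale n"] D0_pos
  by (intro divide_nonneg_nonneg mult_nonneg_nonneg) (auto simp: less_imp_le)

lemma approx_weight_sums:
  assumes "- grid_scale n \<le> y" "ereal y < b"
  shows "(\<lambda>k. approx_weight n k * (1 + y / grid_scale n) ^ k) sums (D 0 y / D 0 0)"
proof -
  have "y - - grid_scale n = grid_scale n * (1 + y / grid_scale n)"
    by (simp add: field_simps)
  then show ?thesis
    using sums_divide[OF taylor_series_sums[OF assms], of "D 0 0"]
    by (simp add: approx_weight_def power_mult_distrib mult_ac)
qed

lemma nn_integral_approx_measure:
  assumes [measurable]: "f \<in> borel_measurable borel"
  shows "(\<integral>\<^sup>+t. f t \<partial>approx_measure n)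
       = (\<Sum>k. ennreal (approx_weight n k) * f (real k / grid_scale n))"
  unfolding approx_measure_def
  by (simp add: nn_integral_distr nn_integral_density nn_integral_count_space_nat)

lemma exp_approx_exponent:
  assumes "- grid_scale n < y"
  shows "exp (approx_exponent n y * (real k / grid_scale n)) = (1 + y / grid_scale n) ^ k"
proof -
  have pos: "0 < 1 + y / grid_scale n"
    using assms by (rule one_plus_div_grid_scale_pos)
  then have "exp (approx_exponent n y * (real k / grid_scale n)) = exp (real k * ln (1 + y / grid_scale n))"
    by (simp add: approx_exponent_def)
  also have "\<dots> = exp (ln (1 + y / grid_scale n)) ^ k"
    by (rule exp_of_nat_mult)
  finally show ?thesis
    using pos by simp
qed

lemma approx_exponent_nonpos:
  assumes "y \<le> 0"
  shows "approx_exponent n y \<le> 0"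
proof (cases "0 < 1 + y / grid_scale n")
  case True
  have "y / grid_scale n \<le> 0"
    using assms by (simp add: divide_nonpos_pos)
  with True show ?thesis
    by (auto simp: approx_exponent_def less_imp_le intro!: mult_nonneg_nonpos)
qed (use assms in \<open>simp add: approx_exponent_def\<close>)

lemma nn_integral_exp_approx_measure:
  assumes "- grid_scale n < y" "ereal y < b"
  shows "(\<integral>\<^sup>+t. ennreal (exp (approx_exponent n y * t)) \<partial>approx_measure n) = ennreal (D 0 y / D 0 0)"
proof -
  have "(\<integral>\<^sup>+t. ennreal (exp (approx_exponent n y * t)) \<partial>approx_measure n)
      = (\<Sum>k. ennreal (approx_weight n k) * ennreal (exp (approx_exponent n y * (real k / grid_scale n))))"
    by (rule nn_integral_approx_measure) simp
  also have "\<dots> = (\<Sum>k. ennreal (approx_weight n k * (1 + y / grid_scale n) ^ k))"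
    by (simp only: exp_approx_exponent[OF assms(1)] ennreal_mult'[symmetric] approx_weight_nonneg)
  also have "\<dots> = ennreal (D 0 y / D 0 0)"
    using approx_weight_sums[OF _ assms(2), of n] assms(1) approx_weight_nonneg
      one_plus_div_grid_scale_pos[OF assms(1)]
    by (intro suminf_ennreal_eq) auto
  finally show ?thesis .
qed

lemma real_distribution_approx_measure: "real_distribution (approx_measure n)"
proof -
  have "emeasure (approx_measure n) (space (approx_measure n)) = 1"
    using nn_integral_exp_approx_measure[of n 0] nonpos_less_b[of 0] D0_pos
    by (simp add: approx_exponent_def)
  then show ?thesis
    by (auto intro!: prob_spaceI simp: real_distribution_def real_distribution_axioms_def approx_measure_def)
qed

lemma emeasure_approx_measure_neg: "emeasure (approx_measure n) {..<0} = 0"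
proof -
  have "(\<lambda>k. real k / grid_scale n) -` {..<0} = {}"
    by (auto simp: field_simps)
  then show ?thesis
    unfolding approx_measure_def by (subst emeasure_distr) auto
qed

lemma sets_approx_measure [measurable_cong, simp]: "sets (approx_measure n) = sets borel"
  and space_approx_measure [simp]: "space (approx_measure n) = UNIV"
  by (simp_all add: approx_measure_def)

lemma approx_measure_tail_le:
  assumes d: "0 < d" "ereal d < b" and T: "0 \<le> T"
  shows "emeasure (approx_measure n) {T<..} \<le> ennreal (D 0 d / D 0 0 / (1 + T * d))"
proof -
  have pos: "0 < 1 + T * d"
    using d T by (simp add: add_pos_nonneg)
  have d_gt: "- grid_scale n < d"
    using d grid_scale_pos[of n] by linarith
  have "emeasure (approx_measure n) {T<..}
      = (\<Sum>k. ennreal (approx_weight n k) * indicator {T<..} (real k / grid_scale n))"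
    using nn_integral_approx_measure[of "indicator {T<..}" n] by simp
  also have "\<dots> \<le> (\<Sum>k. ennreal (approx_weight n k * (1 + d / grid_scale n) ^ k / (1 + T * d)))"
  proof (intro suminf_le summableI)
    fix k
    show "ennreal (approx_weight n k) * indicator {T<..} (real k / grid_scale n)
        \<le> ennreal (approx_weight n k * (1 + d / grid_scale n) ^ k / (1 + T * d))"
    proof (cases "T < real k / grid_scale n")
      case True
      have "1 + T * d \<le> 1 + real k * (d / grid_scale n)"
        using True d by (simp add: field_simps)
      also have "\<dots> \<le> (1 + d / grid_scale n) ^ k"
      proof (intro Bernoulli_inequality)
        show "- 1 \<le> d / grid_scale n"
          using divide_nonneg_pos[OF less_imp_le[OF d(1)] grid_scale_pos[of n]] by linarith
      qed
      finally have "1 \<le> (1 + d / grid_scale n) ^ k / (1 + T * d)"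
        using pos by simp
      then have "approx_weight n k * 1 \<le> approx_weight n k * ((1 + d / grid_scale n) ^ k / (1 + T * d))"
        using approx_weight_nonneg by (rule mult_left_mono)
      then show ?thesis
        using True by (simp add: ennreal_leI)
    qed simp
  qed
  also have "\<dots> = ennreal (D 0 d / D 0 0 / (1 + T * d))"
    using sums_divide[OF approx_weight_sums[OF less_imp_le[OF d_gt] d(2)], of "1 + T * d"] pos
      approx_weight_nonneg one_plus_div_grid_scale_pos[OF d_gt]
    by (intro suminf_ennreal_eq) (auto intro!: divide_nonneg_pos)
  finally show ?thesis .
qed

lemma approx_measure_interval_ge:
  assumes d: "0 < d" "ereal d < b" and T: "0 \<le> T"
  shows "1 - D 0 d / D 0 0 / (1 + T * d) \<le> measure (approx_measure n) {-1<..T}"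
proof -
  interpret prob_space "approx_measure n"
    using real_distribution_approx_measure by (simp add: real_distribution_def)
  have "emeasure (approx_measure n) {..-1} \<le> emeasure (approx_measure n) {..<0}"
    by (rule emeasure_mono) auto
  then have "measure (approx_measure n) {..-1} = 0"
    by (simp add: emeasure_approx_measure_neg measure_def)
  moreover have "measure (approx_measure n) {T<..} \<le> D 0 d / D 0 0 / (1 + T * d)"
  proof -
    have "0 \<le> D 0 d / D 0 0 / (1 + T * d)"
      using nonneg[OF d(2)] D0_pos d T by (simp add: add_pos_nonneg)
    then show ?thesis
      using approx_measure_tail_le[OF d T, of n] by (simp add: emeasure_eq_measure)
  qed
  moreover have "measure (approx_measure n) ({..-1} \<union> {T<..})
      \<le> measure (approx_measure n) {..-1} + measure (approx_measure n) {T<..}"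
    by (rule measure_Un_le) auto
  moreover have "UNIV - ({..-1} \<union> {T<..}) = {-1<..T}"
    by auto
  then have "measure (approx_measure n) {-1<..T} = 1 - measure (approx_measure n) ({..-1} \<union> {T<..})"
    using prob_compl[of "{..-1} \<union> {T<..}"] by simp
  ultimately show ?thesis
    by linarith
qed

lemma tight_approx_measure: "tight approx_measure"
  unfolding tight_def
proof (intro conjI allI impI real_distribution_approx_measure)
  fix e :: real assume e: "0 < e"
  obtain d where d: "0 < d" "ereal d < b"
    using ereal_dense2[OF b_pos] by (metis ereal_less(2))
  define C where "C = D 0 d / D 0 0"
  have C: "0 \<le> C"
    unfolding C_def using nonneg[OF d(2)] D0_pos by simp
  define T where "T = C / (e * d)"
  have T: "0 \<le> T"
    using C e d by (simp add: T_def)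
  have "1 + T * d = (e + C) / e"
    using e d by (simp add: T_def field_simps)
  then have "C / (1 + T * d) = C * e / (e + C)"
    using e C by simp
  also have "\<dots> < e"
    using e C by (simp add: field_simps)
  finally have "1 - e < measure (approx_measure n) {-1<..T}" for n
    using approx_measure_interval_ge[OF d T, of n] by (simp add: C_def)
  moreover have "-1 < T"
    using T by simp
  ultimately show "\<exists>a b. a < b \<and> (\<forall>n. 1 - e < measure (approx_measure n) {a<..b})"
    by blast
qed

lemma approx_exponent_tendsto: "(\<lambda>n. approx_exponent n y) \<longlonglongrightarrow> y"
proof -
  have ev: "eventually (\<lambda>n. - grid_scale n < y) sequentially"
    using eventually_neg_grid_scale_less .
  have "(\<lambda>n. (1 + y / real n) ^ n) \<longlonglongrightarrow> exp y"
    by (rule tendsto_exp_limit_sequentially)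
  then have "(\<lambda>n. ln ((1 + y / grid_scale n) ^ Suc n)) \<longlonglongrightarrow> ln (exp y)"
    unfolding grid_scale_def by (intro tendsto_ln LIMSEQ_Suc) auto
  moreover have "eventually (\<lambda>n. ln ((1 + y / grid_scale n) ^ Suc n) = approx_exponent n y) sequentially"
    using ev
  proof eventually_elim
    case (elim n)
    then have pos: "0 < 1 + y / grid_scale n"
      by (rule one_plus_div_grid_scale_pos)
    then have "approx_exponent n y = real (Suc n) * ln (1 + y / grid_scale n)"
      by (simp add: approx_exponent_def grid_scale_def)
    then show ?case
      by (simp only: ln_realpow)
  qed
  ultimately show ?thesis
    by (simp add: Lim_transform_eventually)
qed

lemma eventually_nn_integral_exp_subseq:
  fixes X :: "nat \<Rightarrow> 'a \<Rightarrow> real"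
  assumes "strict_mono r" and [measurable]: "\<And>n. X n \<in> borel_measurable \<Omega>"
    and X_distr: "\<And>n. distr \<Omega> borel (X n) = approx_measure (r n)" and "ereal y < b"
  shows "eventually (\<lambda>n. (\<integral>\<^sup>+\<omega>. ennreal (exp (approx_exponent (r n) y * X n \<omega>)) \<partial>\<Omega>)
      = ennreal (D 0 y / D 0 0)) sequentially"
  using eventually_subseq[OF assms(1) eventually_neg_grid_scale_less[of y]]
proof eventually_elim
  case (elim n)
  have "(\<integral>\<^sup>+\<omega>. ennreal (exp (approx_exponent (r n) y * X n \<omega>)) \<partial>\<Omega>)
      = (\<integral>\<^sup>+t. ennreal (exp (approx_exponent (r n) y * t)) \<partial>distr \<Omega> borel (X n))"
    by (simp add: nn_integral_distr)
  then show ?case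
    using nn_integral_exp_approx_measure[OF elim \<open>ereal y < b\<close>] by (simp add: X_distr)
qed

lemma laplace_limit_measure:
  obtains P where "real_distribution P" "emeasure P {..<0} = 0"
    "\<And>y. ereal y < b \<Longrightarrow> (\<integral>\<^sup>+t. ennreal (exp (y * t)) \<partial>P) \<le> ennreal (D 0 y / D 0 0)"
    "\<And>y. y \<le> 0 \<Longrightarrow> (\<integral>t. exp (y * t) \<partial>P) = D 0 y / D 0 0"
proof -
  obtain r and \<Omega> :: "real measure" and X :: "nat \<Rightarrow> real \<Rightarrow> real" and Y
    where r: "strict_mono r" and "prob_space \<Omega>" and X [measurable]: "\<And>n. X n \<in> borel_measurable \<Omega>"
    and X_distr: "\<And>n. distr \<Omega> borel (X n) = approx_measure (r n)"
    and [measurable]: "Y \<in> borel_measurable \<Omega>" and "real_distribution (distr \<Omega> borel Y)"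
    and conv: "\<And>\<omega>. \<omega> \<in> space \<Omega> \<Longrightarrow> (\<lambda>n. X n \<omega>) \<longlonglongrightarrow> Y \<omega>"
    using tight_subsequence_Skorohod[OF tight_approx_measure] by blast
  interpret \<Omega>: prob_space \<Omega> by fact
  define P where "P = distr \<Omega> borel Y"
  have X_nonneg: "AE \<omega> in \<Omega>. 0 \<le> X n \<omega>" for n
    by (simp add: AE_nonneg_iff_emeasure_distr_neg X_distr emeasure_approx_measure_neg)
  have "AE \<omega> in \<Omega>. 0 \<le> Y \<omega>"
    by (rule AE_nonneg_limit[OF conv X_nonneg])
  then have P_neg: "emeasure P {..<0} = 0"
    by (simp add: AE_nonneg_iff_emeasure_distr_neg P_def)
  have exponent: "(\<lambda>n. approx_exponent (r n) y) \<longlonglongrightarrow> y" for y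
    using LIMSEQ_subseq_LIMSEQ[OF approx_exponent_tendsto r] by (simp add: comp_def)
  note nn_integral_X = eventually_nn_integral_exp_subseq[OF r X X_distr]
  show thesis
  proof
    show "real_distribution P"
      unfolding P_def by fact
    show "emeasure P {..<0} = 0"
      by (fact P_neg)
    show "(\<integral>\<^sup>+t. ennreal (exp (y * t)) \<partial>P) \<le> ennreal (D 0 y / D 0 0)" if "ereal y < b" for y
      using nn_integral_exp_limit_le[OF _ _ conv exponent nn_integral_X[OF that]]
      by (simp add: P_def nn_integral_distr)
    show "(\<integral>t. exp (y * t) \<partial>P) = D 0 y / D 0 0" if "y \<le> 0" for y
    proof -
      have "ereal y < b"
        using that by (rule nonpos_less_b)
      have lim: "(\<lambda>n. \<integral>\<omega>. exp (approx_exponent (r n) y * X n \<omega>) \<partial>\<Omega>) \<longlonglongrightarrow> (\<integral>t. exp (y * t) \<partial>P)"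
        using \<Omega>.integral_exp_limit[OF _ _ conv exponent approx_exponent_nonpos[OF that] X_nonneg]
        by (simp add: P_def integral_distr)
      have "0 \<le> D 0 y / D 0 0"
        using nonneg[OF \<open>ereal y < b\<close>] D0_pos by simp
      have "eventually (\<lambda>n. (\<integral>\<omega>. exp (approx_exponent (r n) y * X n \<omega>) \<partial>\<Omega>) = D 0 y / D 0 0)
          sequentially"
        using nn_integral_X[OF \<open>ereal y < b\<close>]
        by eventually_elim (simp add: integral_eq_nn_integral \<open>0 \<le> D 0 y / D 0 0\<close>)
      from LIMSEQ_unique[OF lim tendsto_eventually[OF this]] show ?thesis .
    qed
  qed
qed

lemma laplace_representation:
  assumes powser: "\<And>y. ereal \<bar>y\<bar> < b \<Longrightarrow> (\<lambda>m. a m * y ^ m) sums D 0 y"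
  obtains \<mu> :: "real measure" where "finite_measure \<mu>" "sets \<mu> = sets borel" "emeasure \<mu> {..<0} = 0"
    "\<And>y. ereal y < b \<Longrightarrow> integrable \<mu> (\<lambda>t. exp (y * t)) \<and> D 0 y = (\<integral>t. exp (y * t) \<partial>\<mu>)"
    "\<And>m. integrable \<mu> (\<lambda>t. t ^ m) \<and> fact m * a m = (\<integral>t. t ^ m \<partial>\<mu>)"
proof -
  obtain P where P: "real_distribution P" and P_neg: "emeasure P {..<0} = 0"
    and nn_integral_exp: "\<And>y. ereal y < b \<Longrightarrow> (\<integral>\<^sup>+t. ennreal (exp (y * t)) \<partial>P) \<le> ennreal (D 0 y / D 0 0)"
    and laplace: "\<And>y. y \<le> 0 \<Longrightarrow> (\<integral>t. exp (y * t) \<partial>P) = D 0 y / D 0 0"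
    using laplace_limit_measure by blast
  interpret P: real_distribution P by (fact P)
  have nonneg: "AE t in P. 0 \<le> t"
    using P_neg by (intro AE_I'[of "{..<0}"]) (auto simp: null_sets_def)
  have int_exp: "integrable P (\<lambda>t. exp (y * t))" if "ereal y < b" for y
    using nn_integral_exp[OF that] by (intro integrableI_bounded) (auto simp: order_le_less_trans)
  have powser': "(\<lambda>m. a m / D 0 0 * y ^ m) sums (D 0 y / D 0 0)" if "ereal \<bar>y\<bar> < b" for y
    using sums_divide[OF powser[OF that], of "D 0 0"] by (simp add: mult_ac)
  note moments = laplace_powser_moments[where g="\<lambda>y. D 0 y / D 0 0",
      OF P.events_eq_borel nonneg b_pos int_exp powser' laplace]
  define \<mu> where "\<mu> = density P (\<lambda>_. ennreal (D 0 0))"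
  show thesis
  proof
    have "emeasure \<mu> (space \<mu>) = ennreal (D 0 0)"
      using P.emeasure_space_1 by (simp add: \<mu>_def emeasure_density_const)
    then show "finite_measure \<mu>"
      by (intro finite_measureI) simp
    show "sets \<mu> = sets borel"
      by (simp add: \<mu>_def)
    show "emeasure \<mu> {..<0} = 0"
      using P_neg by (simp add: \<mu>_def emeasure_density_const)
    show "integrable \<mu> (\<lambda>t. exp (y * t)) \<and> D 0 y = (\<integral>t. exp (y * t) \<partial>\<mu>)" if "ereal y < b" for y
      using int_exp[OF that] moments(3)[of y] that D0_pos
      by (simp add: \<mu>_def integrable_density_const integral_density_const)
    show "integrable \<mu> (\<lambda>t. t ^ m) \<and> fact m * a m = (\<integral>t. t ^ m \<partial>\<mu>)" for m
      using moments(1,2)[of m] D0_pos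
      by (simp add: \<mu>_def integrable_density_const integral_density_const)
  qed
qed

end

section \<open>Log-convexity and complete monotonicity\<close>

lemma sq_le_mult_if_quadratic_nonneg:
  fixes A B C :: real
  assumes quadratic: "\<And>l. 0 \<le> A - 2 * l * B + l\<^sup>2 * C" and "0 \<le> C"
  shows "B\<^sup>2 \<le> A * C"
proof (cases "C = 0")
  case True
  have "B = 0"
  proof (rule ccontr)
    assume "B \<noteq> 0"
    then have "A - 2 * ((A + 1) / (2 * B)) * B + ((A + 1) / (2 * B))\<^sup>2 * C = -1"
      using True by (simp add: field_simps)
    then show False
      using quadratic[of "(A + 1) / (2 * B)"] by simp
  qed
  then show ?thesis
    using True by simp
next
  case False
  then have "0 < C"
    using \<open>0 \<le> C\<close> by simp
  have "A - 2 * (B / C) * B + (B / C)\<^sup>2 * C = A - B\<^sup>2 / C"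
    using \<open>0 < C\<close> by (simp add: power2_eq_square field_simps)
  with quadratic[of "B / C"] have "B\<^sup>2 / C \<le> A"
    by simp
  with \<open>0 < C\<close> show ?thesis
    by (simp add: pos_divide_le_eq mult.commute)
qed

lemma moments_log_convex:
  fixes M :: "real measure"
  assumes nonneg: "AE t in M. 0 \<le> t" and int: "\<And>j. integrable M (\<lambda>t. t ^ j)"
  shows "(\<integral>t. t ^ (k + 1) \<partial>M)\<^sup>2 \<le> (\<integral>t. t ^ (k + 2) \<partial>M) * (\<integral>t. t ^ k \<partial>M)"
proof (rule sq_le_mult_if_quadratic_nonneg)
  fix l :: real
  have "0 \<le> (\<integral>t. t ^ k * (t - l)\<^sup>2 \<partial>M)"
    using nonneg by (intro integral_nonneg_AE) auto
  also have "(\<integral>t. t ^ k * (t - l)\<^sup>2 \<partial>M) = (\<integral>t. t ^ (k + 2) - 2 * l * t ^ (k + 1) + l\<^sup>2 * t ^ k \<partial>M)"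
    by (rule Bochner_Integration.integral_cong) (auto simp: power2_eq_square algebra_simps)
  also have "\<dots> = (\<integral>t. t ^ (k + 2) \<partial>M) - 2 * l * (\<integral>t. t ^ (k + 1) \<partial>M) + l\<^sup>2 * (\<integral>t. t ^ k \<partial>M)"
    using int[of "k + 2"] int[of "k + 1"] int[of k]
    by (simp del: power_Suc)
  finally show "0 \<le> (\<integral>t. t ^ (k + 2) \<partial>M) - 2 * l * (\<integral>t. t ^ (k + 1) \<partial>M) + l\<^sup>2 * (\<integral>t. t ^ k \<partial>M)" .
  show "0 \<le> (\<integral>t. t ^ k \<partial>M)"
    using nonneg by (intro integral_nonneg_AE) auto
qed

lemma log_convex_if_moments:
  fixes M :: "real measure"
  assumes nonneg: "AE t in M. 0 \<le> t"
    and moments: "\<And>m. integrable M (\<lambda>t. t ^ m) \<and> c (m + 1) = (\<integral>t. t ^ m \<partial>M)"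
    and "2 \<le> m"
  shows "(c m)\<^sup>2 \<le> c (m + 1) * c (m - 1)"
proof -
  define k where "k = m - 2"
  then have "m = k + 2"
    using \<open>2 \<le> m\<close> by simp
  then have "c (m + 1) = (\<integral>t. t ^ (k + 2) \<partial>M)" "c (m - 1) = (\<integral>t. t ^ k \<partial>M)"
    "c m = (\<integral>t. t ^ (k + 1) \<partial>M)"
    using moments[of "k + 2"] moments[of k] moments[of "k + 1"] by (simp_all add: add.commute)
  with moments_log_convex[OF nonneg, of k] moments show ?thesis
    by (simp add: mult.commute)
qed

lemma has_real_derivative_higher_deriv_reflect:
  assumes I: "open I" and f: "smooth_on I f" and x: "x \<in> uminus ` I"
    and higher: "\<forall>x \<in> uminus ` I. (deriv ^^ n) (\<lambda>x. f (- x)) x = (-1) ^ n * (deriv ^^ n) f (- x)"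
  shows "((deriv ^^ n) (\<lambda>x. f (- x)) has_real_derivative (-1) ^ Suc n * (deriv ^^ Suc n) f (- x)) (at x)"
proof -
  have "((deriv ^^ n) f has_real_derivative (deriv ^^ Suc n) f (- x)) (at (- x))"
    using f x by (auto simp: smooth_on_def)
  from DERIV_cmult[OF DERIV_chain2[OF this DERIV_minus[OF DERIV_ident]], of "(-1) ^ n"]
  have "((\<lambda>z. (-1) ^ n * (deriv ^^ n) f (- z)) has_real_derivative
      (-1) ^ Suc n * (deriv ^^ Suc n) f (- x)) (at x)"
    by simp
  then show ?thesis
    by (rule has_field_derivative_transform_within_open[OF _ open_negations[OF I] x]) (use higher in auto)
qed

lemma higher_deriv_reflect:
  assumes "open I" "smooth_on I f"
  shows "\<forall>x \<in> uminus ` I. (deriv ^^ n) (\<lambda>x. f (- x)) x = (-1) ^ n * (deriv ^^ n) f (- x)"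
proof (induction n)
  case (Suc n)
  show ?case
  proof
    fix x assume "x \<in> uminus ` I"
    from DERIV_imp_deriv[OF has_real_derivative_higher_deriv_reflect[OF assms this Suc.IH]]
    show "(deriv ^^ Suc n) (\<lambda>x. f (- x)) x = (-1) ^ Suc n * (deriv ^^ Suc n) f (- x)"
      by simp
  qed
qed simp

lemma compl_monotone_on_reflect:
  assumes "open I" "abs_monotone_on I f"
  shows "compl_monotone_on (uminus ` I) (\<lambda>x. f (- x))"
proof -
  have smooth: "smooth_on I f"
    using assms(2) by (simp add: abs_monotone_on_def)
  note higher = higher_deriv_reflect[OF assms(1) smooth]
  show ?thesis
    unfolding compl_monotone_on_def smooth_on_def
  proof (intro conjI allI ballI)
    fix n x assume x: "x \<in> uminus ` I"
    have "(deriv ^^ Suc n) (\<lambda>x. f (- x)) x = (-1) ^ Suc n * (deriv ^^ Suc n) f (- x)"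
      using higher x by blast
    then show "((deriv ^^ n) (\<lambda>x. f (- x)) has_real_derivative (deriv ^^ Suc n) (\<lambda>x. f (- x)) x) (at x)"
      using has_real_derivative_higher_deriv_reflect[OF assms(1) smooth x higher] by (simp only:)
    show "0 \<le> (-1) ^ n * (deriv ^^ n) (\<lambda>x. f (- x)) x"
      using x higher assms(2) by (auto simp: abs_monotone_on_def)
  qed
qed

lemma compl_monotone_on_reflect_ereal:
  assumes "abs_monotone_on {x. ereal x < b} f"
  shows "compl_monotone_on {x. - b < ereal x} (\<lambda>x. f (- x))"
proof -
  have "open {x. ereal x < b}"
    by (intro open_Collect_less continuous_on_ereal continuous_on_id continuous_on_const)
  moreover have "{x. - b < ereal x} = uminus ` {x. ereal x < b}"
  proof (rule set_eqI)
    fix x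
    have "- b < ereal x \<longleftrightarrow> ereal (- x) < b"
      using ereal_uminus_less_reorder[of b "ereal x"] by simp
    then show "x \<in> {x. - b < ereal x} \<longleftrightarrow> x \<in> uminus ` {x. ereal x < b}"
      by (auto intro: image_eqI[of x uminus "- x"])
  qed
  ultimately show ?thesis
    using compl_monotone_on_reflect[OF _ assms] by simp
qed

lemma in_S_deriv_sums:
  assumes S: "in_S c F" and y: "ereal \<bar>y\<bar> < conv_radius (phi_coeffs c)"
  shows "(\<lambda>m. c (m + 1) / fact m * y ^ m) sums deriv F y"
proof -
  let ?R = "conv_radius (phi_coeffs c)"
  obtain K where K: "ereal \<bar>y\<bar> < ereal K" "ereal K < ?R"
    using ereal_dense2[OF y] by blast
  have "(\<lambda>n. phi_coeffs c n * z ^ n) sums F z" if "norm z < K" for z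
  proof -
    have "ereal \<bar>z\<bar> < ereal K"
      using that by simp
    then have "ereal \<bar>z\<bar> < ?R"
      using K(2) by (rule order.strict_trans)
    then show ?thesis
      using S summable_in_conv_radius[of z "phi_coeffs c"] by (simp add: in_S_def sums_iff)
  qed
  moreover have "ereal y < ?R"
    using order.strict_trans1[OF _ y, of "ereal y"] by simp
  then have "(F has_field_derivative deriv F y) (at y)"
    using S by (simp add: in_S_def DERIV_deriv_iff_real_differentiable)
  moreover have "norm y < K"
    using K(1) by simp
  ultimately have "(\<lambda>n. diffs (phi_coeffs c) n * y ^ n) sums deriv F y"
    by (rule termdiffs_sums_strong)
  moreover have "diffs (phi_coeffs c) n = c (n + 1) / fact n" for n
    by (simp add: diffs_def phi_coeffs_def field_simps del: of_nat_Suc)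
  ultimately show ?thesis
    by simp
qed

lemma in_S_bernstein:
  assumes S: "in_S c F" and "0 < c 1" and "0 < conv_radius (phi_coeffs c)"
  shows "bernstein (\<lambda>k. (deriv ^^ k) (deriv F)) (conv_radius (phi_coeffs c))"
proof -
  have "deriv F 0 = c 1"
    using sums_unique2[OF in_S_deriv_sums[OF S, of 0] powser_sums_zero] assms(3)
    by (simp add: zero_ereal_def)
  then show ?thesis
    using assms by unfold_locales (auto simp: in_S_def abs_monotone_on_def smooth_on_def)
qed

theorem proposition9:
  fixes c :: "nat \<Rightarrow> real" and F :: "real \<Rightarrow> real" and x0 :: ereal
  assumes nonneg: "\<And>m. m \<ge> 1 \<Longrightarrow> c m \<ge> 0"
    and c1: "c 1 > 0"
    and x0_def: "x0 = conv_radius (phi_coeffs c)"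
    and x0_pos: "x0 > 0"
    and S: "in_S c F"
  defines "h \<equiv> (\<lambda>x. deriv F (- x))"
  shows "compl_monotone_on {x. - x0 < ereal x} h
       \<and> (\<exists>\<mu> :: real measure.
            finite_measure \<mu> \<and> sets \<mu> = sets borel \<and> emeasure \<mu> {..<0} = 0
          \<and> (\<forall>x. - x0 < ereal x \<longrightarrow>
               integrable \<mu> (\<lambda>t. exp (- x * t)) \<and> h x = (\<integral>t. exp (- x * t) \<partial>\<mu>))
          \<and> (\<forall>x. ereal \<bar>x\<bar> < x0 \<longrightarrow>
               (\<lambda>m. c (m + 1) / fact m * (- x) ^ m) sums h x)
          \<and> (\<forall>m. integrable \<mu> (\<lambda>t. t ^ m) \<and> c (m + 1) = (\<integral>t. t ^ m \<partial>\<mu>))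
          \<and> measure \<mu> (space \<mu>) = c 1)
       \<and> (\<forall>m\<ge>2. c (m + 1) * c (m - 1) \<ge> (c m)\<^sup>2)"
proof -
  define D where "D k = (deriv ^^ k) (deriv F)" for k
  have powser: "(\<lambda>m. c (m + 1) / fact m * y ^ m) sums D 0 y" if "ereal \<bar>y\<bar> < x0" for y
    using in_S_deriv_sums[OF S] that by (simp add: D_def x0_def)
  interpret bernstein D x0
    using in_S_bernstein[OF S c1] x0_pos by (simp add: D_def[abs_def] x0_def)
  obtain \<mu> where \<mu>: "finite_measure \<mu>" "sets \<mu> = sets borel" "emeasure \<mu> {..<0} = 0"
    and laplace: "\<And>y. ereal y < x0 \<Longrightarrow> integrable \<mu> (\<lambda>t. exp (y * t)) \<and> D 0 y = (\<integral>t. exp (y * t) \<partial>\<mu>)"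
    and moments: "\<And>m. integrable \<mu> (\<lambda>t. t ^ m) \<and> c (m + 1) = (\<integral>t. t ^ m \<partial>\<mu>)"
    using laplace_representation[OF powser] by auto
  have "AE t in \<mu>. 0 \<le> t"
    using \<mu>(2,3) by (intro AE_I'[of "{..<0}"]) (auto simp: null_sets_def)
  then have "(c m)\<^sup>2 \<le> c (m + 1) * c (m - 1)" if "2 \<le> m" for m
    using log_convex_if_moments[OF _ moments that] by blast
  moreover have "compl_monotone_on {x. - x0 < ereal x} h"
    using compl_monotone_on_reflect_ereal S by (simp add: in_S_def x0_def h_def)
  moreover have "integrable \<mu> (\<lambda>t. exp (- x * t)) \<and> h x = (\<integral>t. exp (- x * t) \<partial>\<mu>)"
    if "- x0 < ereal x" for x
    using laplace[of "- x"] that ereal_uminus_less_reorder[of x0 "ereal x"] by (simp add: h_def D_def)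
  moreover have "(\<lambda>m. c (m + 1) / fact m * (- x) ^ m) sums h x" if "ereal \<bar>x\<bar> < x0" for x
    using powser[of "- x"] that by (simp add: h_def D_def)
  moreover have "measure \<mu> (space \<mu>) = c 1"
    using moments[of 0] by simp
  ultimately show ?thesis
    using \<mu> moments by blast
qed

end
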